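(* Let $m=1$, $n,T\in\mathbb{N}$, $L\in[1,T]$ with $n+L\le T$, $u_{[0,T-1]}\in\mathbb{R}^T$, and let $\eta=\begin{bmatrix}\eta_0&\cdots&\eta_{n+L-1}\end{bmatrix}^\top\in\mathbb{R}^{n+L}\setminus\{0\}$ satisfy $\eta^\top\mathcal{H}_{n+L}(u_{[0,T-1]})=0$. Define $\Lambda(\eta)=\{\lambda\in\mathbb{C}:\sum_{i=0}^{n+L-1}\lambda^i\eta_i=0\}$. Then for every $A\in\mathbb{R}^{n\times n}$ with $\operatorname{spec}A\cap\Lambda(\eta)=\varnothing$ and every $B\in\mathbb{R}^{n}$, there exists a state sequence $x_{[0,T-L]}$ satisfying $x(t+1)=Ax(t)+Bu(t)$ for all $t\in[0,T-L-1]$ such that $$\operatorname{rank}\begin{bmatrix}\mathcal{H}_L(u_{[0,T-1]})\\ \mathcal{H}_1(x_{[0,T-L]})\end{bmatrix}<n+L.$$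
   Context: For $v:\mathbb{Z}_+\to\mathbb{R}^q$, $v_{[0,T-1]}=\begin{bmatrix}v(0)^\top & \cdots & v(T-1)^\top\end{bmatrix}^\top$. For $k\in[1,T]$ the Hankel matrix of depth $k$ is the $qk\times(T-k+1)$ block matrix $\mathcal{H}_k(v_{[0,T-1]})$ whose $(i,j)$ block ($i\in[0,k-1]$, $j\in[0,T-k]$) is $v(i+j)$; in particular $\mathcal{H}_1(x_{[0,T-L]})=\begin{bmatrix}x(0)&\cdots&x(T-L)\end{bmatrix}$. $\operatorname{spec}A$ denotes the set of (complex) eigenvalues of $A$. *)

theory Defs
  imports "Jordan_Normal_Form.DL_Rank" "Jordan_Normal_Form.Char_Poly"
begin

text \<open>Block Hankel matrix of depth k of a q-dimensional signal v on [0, Tlen-1]: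
  a (q*k) x (Tlen-k+1) matrix whose (i,j) block is v(i+j).\<close>
definition hankel :: "nat \<Rightarrow> nat \<Rightarrow> nat \<Rightarrow> (nat \<Rightarrow> 'a vec) \<Rightarrow> 'a mat" where
  "hankel q k Tlen v = mat (q * k) (Tlen - k + 1) (\<lambda>(r, c). v (r div q + c) $ (r mod q))"

definition hankel_scalar :: "nat \<Rightarrow> nat \<Rightarrow> (nat \<Rightarrow> 'a) \<Rightarrow> 'a mat" where
  "hankel_scalar k Tlen u = mat k (Tlen - k + 1) (\<lambda>(i, j). u (i + j))"

definition spec :: "real mat \<Rightarrow> complex set" where
  "spec A = {z. eigenvalue (map_mat complex_of_real A) z}"

definition Lambda :: "real vec \<Rightarrow> complex set" where
  "Lambda \<eta> = {z. (\<Sum>i<dim_vec \<eta>. z ^ i * complex_of_real (\<eta> $ i)) = 0}"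

end

theory Submission
  imports Defs
begin

text \<open>Let \<open>p\<close> be the polynomial with coefficient vector \<open>\<eta>\<close>, \<open>d\<close> its degree, and \<open>p(\<sigma>)\<close> the
  operator obtained by substituting the shift \<open>\<sigma>\<close> of sequences into \<open>p\<close>. The hypothesis on the
  Hankel matrix says that \<open>p(\<sigma>) u\<close> vanishes on every window inside the data, i.e. up to time
  \<open>K = T - (n + L) + d\<close>; solving the recurrence \<open>p(\<sigma>) v = 0\<close> extends \<open>u\<close> beyond \<open>K\<close> to an
  input \<open>v\<close> annihilated everywhere. As no eigenvalue of \<open>A\<close> is a root of \<open>p\<close>, the matrix \<open>p(A)\<close>
  is invertible, so the initial state can be chosen with \<open>(p(\<sigma>) x)(0) = 0\<close>; along the trajectory
  driven by \<open>v\<close> this propagates to all times. The stacked columns \<open>[v(t..t+L-1); x(t)]\<close> then obey a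
  recurrence of order \<open>d\<close>, so they lie in the span of the first \<open>d\<close> of them, and the trajectory
  driven by the true input differs from this one only in its last \<open>n + L - 1 - d\<close> columns.\<close>

definition poly_mat :: "'a::comm_ring_1 poly \<Rightarrow> 'a mat \<Rightarrow> 'a mat" where
  "poly_mat p A = foldr (\<lambda>c M. c \<cdot>\<^sub>m 1\<^sub>m (dim_row A) + A * M) (coeffs p) (0\<^sub>m (dim_row A) (dim_row A))"

context
  fixes A :: "'a::comm_ring_1 mat" and n :: nat
  assumes A: "A \<in> carrier_mat n n"
begin

lemma poly_mat_carrier[simp]: "poly_mat p A \<in> carrier_mat n n"
proof -
  have "foldr (\<lambda>c M. c \<cdot>\<^sub>m 1\<^sub>m n + A * M) cs (0\<^sub>m n n) \<in> carrier_mat n n" for cs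
    using A by (induct cs) auto
  then show ?thesis using A unfolding poly_mat_def by auto
qed

lemma dim_poly_mat[simp]: "dim_row (poly_mat p A) = n" "dim_col (poly_mat p A) = n"
  using poly_mat_carrier by (blast intro: carrier_matD)+

lemma poly_mat_0[simp]: "poly_mat 0 A = 0\<^sub>m n n"
  using A unfolding poly_mat_def by simp

lemma poly_mat_pCons: "poly_mat (pCons a p) A = a \<cdot>\<^sub>m 1\<^sub>m n + A * poly_mat p A"
proof (cases "a = 0 \<and> p = 0")
  case True
  then show ?thesis using A by (auto simp: poly_mat_def)
next
  case False
  then have "coeffs (pCons a p) = a # coeffs p" by (auto simp: cCons_def)
  then show ?thesis using A unfolding poly_mat_def by simp
qed

lemma poly_mat_1: "poly_mat 1 A = 1\<^sub>m n"
  unfolding one_pCons poly_mat_pCons poly_mat_0 right_mult_zero_mat[OF A]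
  by (intro eq_matI) auto

lemma poly_mat_add: "poly_mat (p + q) A = poly_mat p A + poly_mat q A"
proof (induct p q rule: poly_induct2)
  case 0 then show ?case using A by simp
next
  case (pCons a p b q)
  have c: "poly_mat p A \<in> carrier_mat n n" "poly_mat q A \<in> carrier_mat n n" by auto
  show ?case unfolding add_pCons poly_mat_pCons pCons mult_add_distrib_mat[OF A c]
    using A c by (intro eq_matI) (auto simp: algebra_simps)
qed

lemma poly_mat_smult: "poly_mat (smult c p) A = c \<cdot>\<^sub>m poly_mat p A"
proof (induct p)
  case 0 then show ?case by simp
next
  case (pCons a p)
  have c: "poly_mat p A \<in> carrier_mat n n" by auto
  show ?case unfolding smult_pCons poly_mat_pCons pCons.hyps mult_smult_distrib[OF A c]
    using A c by (intro eq_matI) (auto simp: algebra_simps)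
qed

lemma poly_mat_mult: "poly_mat (p * q) A = poly_mat p A * poly_mat q A"
proof (induct p)
  case 0 then show ?case by (simp add: left_mult_zero_mat[of _ n])
next
  case (pCons a p)
  have c: "poly_mat p A \<in> carrier_mat n n" "poly_mat q A \<in> carrier_mat n n" by auto
  have "poly_mat (pCons a p) A * poly_mat q A
      = (a \<cdot>\<^sub>m 1\<^sub>m n) * poly_mat q A + (A * poly_mat p A) * poly_mat q A"
    unfolding poly_mat_pCons using A c by (intro add_mult_distrib_mat) auto
  also have "\<dots> = a \<cdot>\<^sub>m poly_mat q A + A * (poly_mat p A * poly_mat q A)"
    using A c by (simp add: assoc_mult_mat[OF A c] mult_smult_assoc_mat[OF one_carrier_mat c(2)])
  also have "\<dots> = poly_mat (pCons a p * q) A"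
    unfolding mult_pCons_left poly_mat_add poly_mat_smult poly_mat_pCons pCons.hyps
    using A c by (intro eq_matI) auto
  finally show ?case by (rule sym)
qed

end

lemma det_poly_mat_linear_factors:
  fixes A :: "'a::field mat"
  assumes A: "A \<in> carrier_mat n n"
  shows "det (poly_mat (\<Prod>a\<leftarrow>as. [:- a, 1:]) A) = (\<Prod>a\<leftarrow>as. det (char_matrix A a))"
proof (induct as)
  case Nil then show ?case by (simp add: poly_mat_1[OF A])
next
  case (Cons a as)
  have "poly_mat [:- a, 1:] A = char_matrix A a"
    unfolding poly_mat_pCons[OF A] poly_mat_1[OF A, unfolded one_pCons] char_matrix_def
    using A by (intro eq_matI) auto
  moreover have "(\<Prod>a\<leftarrow>a # as. [:- a, 1:]) = [:- a, 1:] * (\<Prod>a\<leftarrow>as. [:- a, 1:])"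
    by simp
  ultimately show ?case
    using A Cons by (simp only: poly_mat_mult[OF A] det_mult[of _ n] poly_mat_carrier[OF A]
        char_matrix_closed prod_list.Cons list.map)
qed

lemma det_poly_mat_nonzero:
  fixes A :: "complex mat"
  assumes A: "A \<in> carrier_mat n n" and "p \<noteq> 0"
    and no_root: "\<And>\<mu>. eigenvalue A \<mu> \<Longrightarrow> poly p \<mu> \<noteq> 0"
  shows "det (poly_mat p A) \<noteq> 0"
proof -
  obtain as where p: "p = smult (lead_coeff p) (\<Prod>a\<leftarrow>as. [:- a, 1:])"
    using fundamental_theorem_algebra_factorized[of p] by metis
  have "det (char_matrix A a) \<noteq> 0" if "a \<in> set as" for a
  proof -
    have "poly p a = 0" using that by (subst p) (auto simp: poly_prod_list_zero_iff)
    then show ?thesis using no_root eigenvalue_det[OF A] by blast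
  qed
  then show ?thesis using \<open>p \<noteq> 0\<close> A
    by (subst p) (auto simp: poly_mat_smult[OF A] det_poly_mat_linear_factors[OF A] prod_list_zero_iff)
qed

lemma (in comm_ring_hom) poly_mat_hom:
  assumes A: "A \<in> carrier_mat n n"
  shows "mat\<^sub>h (poly_mat p A) = poly_mat (map_poly hom p) (mat\<^sub>h A)"
proof (induct p)
  case 0
  have "mat\<^sub>h A \<in> carrier_mat n n" using A by simp
  then show ?case using A by (intro eq_matI) auto
next
  case (pCons a p)
  have Ah: "mat\<^sub>h A \<in> carrier_mat n n" using A by simp
  show ?case
    unfolding map_poly_pCons_hom poly_mat_pCons[OF A] poly_mat_pCons[OF Ah] pCons(2)[symmetric]
      mat_hom_mult[OF A poly_mat_carrier[OF A], symmetric]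
    using A by (intro eq_matI) (auto simp: hom_add)
qed

text \<open>\<open>poly_shift_op p f s\<close> is \<open>(p(\<sigma>) f)(s)\<close>, where \<open>\<sigma>\<close> is the shift \<open>f \<mapsto> f \<circ> Suc\<close>.\<close>

definition poly_shift_op :: "'a::comm_ring_1 poly \<Rightarrow> (nat \<Rightarrow> 'a) \<Rightarrow> nat \<Rightarrow> 'a" where
  "poly_shift_op p f s = (\<Sum>i\<le>degree p. coeff p i * f (s + i))"

lemma poly_shift_op_0[simp]: "poly_shift_op 0 f s = 0"
  by (simp add: poly_shift_op_def)

lemma poly_shift_op_pCons: "poly_shift_op (pCons a p) f s = a * f s + poly_shift_op p f (Suc s)"
proof (cases "p = 0")
  case True then show ?thesis by (simp add: poly_shift_op_def)
next
  case False
  then show ?thesis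
    unfolding poly_shift_op_def degree_pCons_eq[OF False] sum.atMost_Suc_shift by simp
qed

lemma poly_shift_op_offset: "poly_shift_op p (\<lambda>t. f (r + t)) s = poly_shift_op p f (r + s)"
  by (simp add: poly_shift_op_def ac_simps)

lemma poly_shift_op_add: "poly_shift_op p (\<lambda>t. f t + g t) s = poly_shift_op p f s + poly_shift_op p g s"
  by (simp add: poly_shift_op_def distrib_left sum.distrib)

lemma poly_shift_op_cmult: "poly_shift_op p (\<lambda>t. c * f t) s = c * poly_shift_op p f s"
  by (simp add: poly_shift_op_def sum_distrib_left ac_simps)

lemma poly_shift_op_lincomb:
  "poly_shift_op p (\<lambda>t. \<Sum>l\<in>I. c l * f l t) s = (\<Sum>l\<in>I. c l * poly_shift_op p (f l) s)"
  by (simp add: poly_shift_op_def sum_distrib_left sum.swap[of _ I] ac_simps)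

lemma poly_shift_op_mult_mat_vec:
  assumes A: "A \<in> carrier_mat nr n" and y: "\<And>t. y t \<in> carrier_vec n" and k: "k < nr"
  shows "poly_shift_op p (\<lambda>t. (A *\<^sub>v y t) $ k) s = (\<Sum>l<n. A $$ (k, l) * poly_shift_op p (\<lambda>t. y t $ l) s)"
proof -
  have "(A *\<^sub>v y t) $ k = (\<Sum>l<n. A $$ (k, l) * y t $ l)" for t
    using A y[of t] k by (simp add: scalar_prod_def atLeast0LessThan)
  then show ?thesis by (simp add: poly_shift_op_lincomb)
qed

lemma poly_mat_mult_vec_poly_shift_op:
  assumes A: "A \<in> carrier_mat n n" and y: "\<And>t. y t \<in> carrier_vec n"
    and y_Suc: "\<And>t. y (Suc t) = A *\<^sub>v y t" and k: "k < n"
  shows "(poly_mat p A *\<^sub>v y s) $ k = poly_shift_op p (\<lambda>t. y t $ k) s"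
  using k
proof (induct p arbitrary: s k)
  case 0 then show ?case using A y by simp
next
  case (pCons a p)
  have P: "poly_mat p A \<in> carrier_mat n n" using A by simp
  have "(poly_mat (pCons a p) A *\<^sub>v y s) $ k = a * y s $ k + (A *\<^sub>v (poly_mat p A *\<^sub>v y s)) $ k"
    unfolding poly_mat_pCons[OF A] using A P y pCons.prems
    by (simp add: add_mult_distrib_mat_vec[of _ n n] assoc_mult_mat_vec[of _ n n _ n]
        smult_scalar_prod_distrib[of _ n])
  also have "(A *\<^sub>v (poly_mat p A *\<^sub>v y s)) $ k = (\<Sum>l<n. A $$ (k, l) * poly_shift_op p (\<lambda>t. y t $ l) s)"
    using A P y pCons.prems pCons.hyps(2) by (simp add: scalar_prod_def atLeast0LessThan)
  also have "\<dots> = poly_shift_op p (\<lambda>t. (A *\<^sub>v y t) $ k) s"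
    by (rule poly_shift_op_mult_mat_vec[OF A y pCons.prems, symmetric])
  also have "\<dots> = poly_shift_op p (\<lambda>t. y t $ k) (Suc s)"
    using poly_shift_op_offset[of p "\<lambda>t. y t $ k" 1 s] by (simp add: y_Suc)
  finally show ?case by (simp add: poly_shift_op_pCons)
qed

primrec trajectory :: "'a::comm_ring_1 mat \<Rightarrow> 'a vec \<Rightarrow> (nat \<Rightarrow> 'a) \<Rightarrow> 'a vec \<Rightarrow> nat \<Rightarrow> 'a vec" where
  "trajectory A B w x0 0 = x0"
| "trajectory A B w x0 (Suc t) = A *\<^sub>v trajectory A B w x0 t + w t \<cdot>\<^sub>v B"

lemma trajectory_cong: "(\<And>s. s < t \<Longrightarrow> w s = w' s) \<Longrightarrow> trajectory A B w x0 t = trajectory A B w' x0 t"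
  by (induct t) auto

context
  fixes A :: "'a::comm_ring_1 mat" and B :: "'a vec" and n :: nat
  assumes A: "A \<in> carrier_mat n n" and B: "B \<in> carrier_vec n"
begin

lemma trajectory_carrier[simp]: "x0 \<in> carrier_vec n \<Longrightarrow> trajectory A B w x0 t \<in> carrier_vec n"
  using A B by (induct t) auto

lemma trajectory_superposition:
  assumes "x0 \<in> carrier_vec n" "x0' \<in> carrier_vec n"
  shows "trajectory A B (\<lambda>t. w t + w' t) (x0 + x0') t = trajectory A B w x0 t + trajectory A B w' x0' t"
proof (induct t)
  case (Suc t)
  have "trajectory A B w x0 t \<in> carrier_vec n" "trajectory A B w' x0' t \<in> carrier_vec n"
    using assms by simp_all
  then show ?case using Suc A B
    by (intro eq_vecI) (auto simp: mult_add_distrib_mat_vec[OF A] algebra_simps)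
qed simp

lemma poly_shift_op_trajectory_Suc:
  assumes x0: "x0 \<in> carrier_vec n" and k: "k < n"
  shows "poly_shift_op p (\<lambda>t. trajectory A B w x0 t $ k) (Suc s)
    = (\<Sum>l<n. A $$ (k, l) * poly_shift_op p (\<lambda>t. trajectory A B w x0 t $ l) s) + B $ k * poly_shift_op p w s"
proof -
  let ?x = "trajectory A B w x0"
  have "poly_shift_op p (\<lambda>t. ?x t $ k) (Suc s) = poly_shift_op p (\<lambda>t. (A *\<^sub>v ?x t) $ k + B $ k * w t) s"
    using poly_shift_op_offset[of p "\<lambda>t. ?x t $ k" 1 s] A B x0 k by (simp add: mult.commute)
  then show ?thesis
    by (simp add: poly_shift_op_add poly_shift_op_cmult poly_shift_op_mult_mat_vec[OF A trajectory_carrier[OF x0] k])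
qed

lemma trajectory_poly_shift_op_zero:
  assumes x0: "x0 \<in> carrier_vec n" and w: "\<And>s. poly_shift_op p w s = 0"
    and init: "\<And>k. k < n \<Longrightarrow> poly_shift_op p (\<lambda>t. trajectory A B w x0 t $ k) 0 = 0"
  shows "k < n \<Longrightarrow> poly_shift_op p (\<lambda>t. trajectory A B w x0 t $ k) s = 0"
proof (induct s arbitrary: k)
  case (Suc s)
  then show ?case by (simp add: poly_shift_op_trajectory_Suc[OF x0] w)
qed (rule init)

end

lemma exists_initial_state_poly_shift_op_zero:
  fixes A :: "'a::field mat"
  assumes A: "A \<in> carrier_mat n n" and B: "B \<in> carrier_vec n" and P: "det (poly_mat p A) \<noteq> 0"
  obtains x0 where "x0 \<in> carrier_vec n" "\<And>k. k < n \<Longrightarrow> poly_shift_op p (\<lambda>t. trajectory A B w x0 t $ k) 0 = 0"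
proof -
  define c where "c = vec n (\<lambda>k. - poly_shift_op p (\<lambda>t. trajectory A B w (0\<^sub>v n) t $ k) 0)"
  obtain Q where Q: "Q \<in> carrier_mat n n" "poly_mat p A * Q = 1\<^sub>m n"
    using det_non_zero_imp_unit[OF poly_mat_carrier[OF A] P, of "()"]
    by (auto simp: Units_def ring_mat_def)
  define x0 where "x0 = Q *\<^sub>v c"
  have x0: "x0 \<in> carrier_vec n" using Q by (simp add: x0_def c_def)
  have Px0: "poly_mat p A *\<^sub>v x0 = c"
    using Q A by (simp add: x0_def c_def assoc_mult_mat_vec[symmetric, of _ n n _ n])
  have "poly_shift_op p (\<lambda>t. trajectory A B w x0 t $ k) 0 = 0" if k: "k < n" for k
  proof -
    let ?y = "trajectory A B (\<lambda>_. 0) x0"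
    have y: "?y t \<in> carrier_vec n" "?y (Suc t) = A *\<^sub>v ?y t" for t
      using A B x0 trajectory_carrier[OF A B x0] by auto
    have "trajectory A B w x0 t $ k = ?y t $ k + trajectory A B w (0\<^sub>v n) t $ k" for t
      using trajectory_superposition[OF A B x0 zero_carrier_vec, of "\<lambda>_. 0" w t] x0 k
        trajectory_carrier[OF A B zero_carrier_vec, of w t] by simp
    then have "poly_shift_op p (\<lambda>t. trajectory A B w x0 t $ k) 0
        = poly_shift_op p (\<lambda>t. ?y t $ k) 0 + poly_shift_op p (\<lambda>t. trajectory A B w (0\<^sub>v n) t $ k) 0"
      using k A B x0 by (simp add: poly_shift_op_add)
    also have "poly_shift_op p (\<lambda>t. ?y t $ k) 0 = c $ k"
      using poly_mat_mult_vec_poly_shift_op[where y = ?y, OF A y k, of p 0] Px0 by simp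
    finally show ?thesis using k by (simp add: c_def)
  qed
  then show thesis using that x0 by blast
qed

text \<open>Beyond \<open>K\<close> the recurrence \<open>p(\<sigma>) u = 0\<close> is solved for the newest value; the guard
  \<open>t < degree p\<close> only serves termination.\<close>

function annihilating_extension :: "'a::field poly \<Rightarrow> nat \<Rightarrow> (nat \<Rightarrow> 'a) \<Rightarrow> nat \<Rightarrow> 'a" where
  "annihilating_extension p K u t = (if t \<le> K \<or> t < degree p then u t
     else - (\<Sum>i<degree p. coeff p i * annihilating_extension p K u (t - degree p + i)) / lead_coeff p)"
  by auto
termination by (relation "measure (\<lambda>(p, K, u, t). t)") auto

declare annihilating_extension.simps[simp del]

lemma annihilating_extension_eq: "t \<le> K \<Longrightarrow> annihilating_extension p K u t = u t"
  by (simp add: annihilating_extension.simps)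

lemma poly_shift_op_annihilating_extension:
  assumes "p \<noteq> 0" and u: "\<And>s. s + degree p \<le> K \<Longrightarrow> poly_shift_op p u s = 0"
  shows "poly_shift_op p (annihilating_extension p K u) s = 0"
proof (cases "s + degree p \<le> K")
  case True
  then have "poly_shift_op p (annihilating_extension p K u) s = poly_shift_op p u s"
    unfolding poly_shift_op_def by (intro sum.cong) (auto simp: annihilating_extension_eq)
  then show ?thesis using u True by simp
next
  case False
  let ?v = "annihilating_extension p K u"
  have "?v (s + degree p) = - (\<Sum>i<degree p. coeff p i * ?v (s + i)) / lead_coeff p"
    using False by (subst annihilating_extension.simps) simp
  then have "lead_coeff p * ?v (s + degree p) = - (\<Sum>i<degree p. coeff p i * ?v (s + i))"
    using \<open>p \<noteq> 0\<close> by (simp add: field_simps)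
  then show ?thesis by (simp add: poly_shift_op_def lessThan_Suc_atMost[symmetric])
qed

lemma (in vec_space) rank_le_card_span:
  assumes A: "A \<in> carrier_mat n nc" and W: "W \<subseteq> carrier_vec n" "finite W"
    and cols: "set (cols A) \<subseteq> span W"
  shows "rank A \<le> card W"
proof -
  obtain S where S: "maximal S (\<lambda>T. T \<subseteq> set (cols A) \<and> lin_indpt T)"
    using maximal_exists[of "\<lambda>T. T \<subseteq> set (cols A) \<and> lin_indpt T" "card (set (cols A))" "{}"]
    by (meson List.finite_set card_mono empty_iff empty_subsetI finite_lin_indpt2 rev_finite_subset)
  then have SA: "S \<subseteq> set (cols A)" and li: "lin_indpt S" unfolding maximal_def by auto
  have "card S \<le> card W"
    using replacement[OF finite_subset[OF SA] W(2) W(1) li] SA cols by force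
  then show ?thesis using rank_card_indpt[OF A S] by simp
qed

lemma (in vec_space) sum_in_span:
  assumes S: "S \<subseteq> carrier_vec n" and "finite I" and v: "\<And>i. i \<in> I \<Longrightarrow> v i \<in> span S"
  shows "vec n (\<lambda>r. \<Sum>i\<in>I. c i * v i $ r) \<in> span S"
  using \<open>finite I\<close> v
proof (induct I rule: finite_induct)
  case empty
  show ?case
    using vectorspace.span_zero[OF vectorspace_axioms] by (simp add: zero_vec_def[symmetric])
next
  case (insert i I)
  have vi: "v i \<in> carrier_vec n" using insert.prems span_closed[OF S] by auto
  have "vec n (\<lambda>r. \<Sum>j\<in>insert i I. c j * v j $ r) = c i \<cdot>\<^sub>v v i + vec n (\<lambda>r. \<Sum>j\<in>I. c j * v j $ r)"
    using insert.hyps vi by (intro eq_vecI) auto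
  then show ?case using insert span_add1[OF S] smult_in_span[OF S] by auto
qed

lemma (in vec_space) poly_shift_op_zero_in_span:
  assumes "p \<noteq> 0" and z: "\<And>t. z t \<in> carrier_vec n"
    and ann: "\<And>r s. r < n \<Longrightarrow> poly_shift_op p (\<lambda>t. z t $ r) s = 0"
  shows "z t \<in> span (z ` {..<degree p})"
proof (induct t rule: less_induct)
  case (less t)
  let ?S = "z ` {..<degree p}"
  have S: "?S \<subseteq> carrier_vec n" using z by auto
  show ?case
  proof (cases "t < degree p")
    case True
    then show ?thesis using span_mem[OF S] by auto
  next
    case False
    define s where "s = t - degree p"
    have t: "t = s + degree p" using False by (simp add: s_def)
    have "z t = vec n (\<lambda>r. \<Sum>i<degree p. (- coeff p i / lead_coeff p) * z (s + i) $ r)"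
    proof (rule eq_vecI)
      fix r assume "r < dim_vec (vec n (\<lambda>r. \<Sum>i<degree p. (- coeff p i / lead_coeff p) * z (s + i) $ r))"
      then have r: "r < n" by simp
      have "lead_coeff p * z t $ r = - (\<Sum>i<degree p. coeff p i * z (s + i) $ r)"
        using ann[OF r, of s] t
        by (simp add: poly_shift_op_def lessThan_Suc_atMost[symmetric] eq_neg_iff_add_eq_0 add.commute)
      then have "z t $ r = (\<Sum>i<degree p. - coeff p i * z (s + i) $ r) / lead_coeff p"
        using \<open>p \<noteq> 0\<close> by (simp add: field_simps sum_negf)
      then show "z t $ r = vec n (\<lambda>r. \<Sum>i<degree p. (- coeff p i / lead_coeff p) * z (s + i) $ r) $ r"
        using r by (simp add: sum_divide_distrib)
    qed (use z in auto)
    also have "\<dots> \<in> span ?S"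
      using less t by (intro sum_in_span[OF S]) auto
    finally show ?thesis .
  qed
qed

lemma (in vec_space) rank_le_poly_shift_op_zero_prefix:
  assumes M: "M \<in> carrier_mat n C" and "p \<noteq> 0" and z: "\<And>t. z t \<in> carrier_vec n"
    and ann: "\<And>r s. r < n \<Longrightarrow> poly_shift_op p (\<lambda>t. z t $ r) s = 0"
    and prefix: "\<And>t. t < m \<Longrightarrow> col M t = z t"
  shows "rank M \<le> degree p + (C - m)"
proof -
  define S where "S = z ` {..<degree p} \<union> col M ` {m..<C}"
  have S: "S \<subseteq> carrier_vec n" using z M by (auto simp: S_def)
  have "set (cols M) \<subseteq> span S"
  proof
    fix v assume "v \<in> set (cols M)"
    then obtain t where t: "t < C" and v: "v = col M t"
      using M by (auto simp: in_set_conv_nth)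
    show "v \<in> span S"
    proof (cases "t < m")
      case True
      then have "v \<in> span (z ` {..<degree p})"
        using v prefix poly_shift_op_zero_in_span[OF \<open>p \<noteq> 0\<close> z ann] by simp
      then show ?thesis using span_is_monotone[of "z ` {..<degree p}" S] by (auto simp: S_def)
    next
      case False
      then show ?thesis using t v S span_mem by (auto simp: S_def)
    qed
  qed
  then have "rank M \<le> card S" using rank_le_card_span[OF M S] by (simp add: S_def)
  also have "\<dots> \<le> card (z ` {..<degree p}) + card (col M ` {m..<C})"
    unfolding S_def by (rule card_Un_le)
  also have "\<dots> \<le> degree p + (C - m)"
    by (intro add_mono card_image_le[THEN order_trans]) auto
  finally show ?thesis .
qed

definition stacked_column :: "nat \<Rightarrow> nat \<Rightarrow> (nat \<Rightarrow> 'a) \<Rightarrow> (nat \<Rightarrow> 'a vec) \<Rightarrow> nat \<Rightarrow> 'a vec" where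
  "stacked_column L n u x t = vec (L + n) (\<lambda>r. if r < L then u (r + t) else x t $ (r - L))"

lemma col_hankel_stack:
  assumes "t < T - L + 1"
  shows "col (hankel_scalar L T u @\<^sub>r hankel n 1 (T - L + 1) x) t = stacked_column L n u x t"
  using assms by (intro eq_vecI) (auto simp: append_rows_def hankel_scalar_def hankel_def stacked_column_def)

lemma poly_shift_op_stacked_column:
  assumes u: "\<And>s. poly_shift_op p u s = 0"
    and x: "\<And>k s. k < n \<Longrightarrow> poly_shift_op p (\<lambda>t. x t $ k) s = 0" and r: "r < L + n"
  shows "poly_shift_op p (\<lambda>t. stacked_column L n u x t $ r) s = 0"
proof (cases "r < L")
  case True
  then show ?thesis using r u poly_shift_op_offset[of p u r s] by (simp add: stacked_column_def)
next
  case False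
  then show ?thesis using r x[of "r - L" s] by (simp add: stacked_column_def)
qed

lemma exists_trajectory_rank_less:
  fixes A :: "'a::field mat" and u :: "nat \<Rightarrow> 'a"
  assumes A: "A \<in> carrier_mat n n" and B: "B \<in> carrier_vec n"
    and "p \<noteq> 0" and deg: "degree p < n + L" and T: "n + L \<le> T"
    and u: "\<And>s. s \<le> T - (n + L) \<Longrightarrow> poly_shift_op p u s = 0"
    and P: "det (poly_mat p A) \<noteq> 0"
  shows "\<exists>x. (\<forall>t \<le> T - L. x t \<in> carrier_vec n) \<and> (\<forall>t < T - L. x (t + 1) = A *\<^sub>v x t + u t \<cdot>\<^sub>v B) \<and>
    vec_space.rank (L + n) (hankel_scalar L T u @\<^sub>r hankel n 1 (T - L + 1) x) < n + L"
proof -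
  define K where "K = T - (n + L) + degree p"
  define v where "v = annihilating_extension p K u"
  have v: "poly_shift_op p v s = 0" for s
    unfolding v_def using u by (intro poly_shift_op_annihilating_extension[OF \<open>p \<noteq> 0\<close>]) (auto simp: K_def)
  obtain x0 where x0: "x0 \<in> carrier_vec n"
    and init: "\<And>k. k < n \<Longrightarrow> poly_shift_op p (\<lambda>t. trajectory A B v x0 t $ k) 0 = 0"
    using exists_initial_state_poly_shift_op_zero[OF A B P] by blast
  define x where "x = trajectory A B u x0"
  have x_eq: "x t = trajectory A B v x0 t" if "t \<le> K + 1" for t
    unfolding x_def v_def using that by (intro trajectory_cong) (simp add: annihilating_extension_eq)
  define z where "z = stacked_column L n v (trajectory A B v x0)"
  have z: "z t \<in> carrier_vec (L + n)" for t by (simp add: z_def stacked_column_def)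
  have z_ann: "poly_shift_op p (\<lambda>t. z t $ r) s = 0" if "r < L + n" for r s
    unfolding z_def using v trajectory_poly_shift_op_zero[OF A B x0 v init] that
    by (intro poly_shift_op_stacked_column) auto
  define M where "M = hankel_scalar L T u @\<^sub>r hankel n 1 (T - L + 1) x"
  have M: "M \<in> carrier_mat (L + n) (T - L + 1)"
    by (simp add: M_def hankel_scalar_def hankel_def carrier_append_rows)
  have prefix: "col M t = z t" if "t < K + 2 - L" for t
  proof -
    have "col M t = stacked_column L n u x t"
      unfolding M_def using that T deg by (intro col_hankel_stack) (simp add: K_def)
    also have "\<dots> = z t"
      using that unfolding z_def stacked_column_def
      by (intro eq_vecI) (auto simp: x_eq v_def annihilating_extension_eq)
    finally show ?thesis .
  qed
  have "vec_space.rank (L + n) M \<le> degree p + (T - L + 1 - (K + 2 - L))"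
    by (rule vec_space.rank_le_poly_shift_op_zero_prefix[OF M \<open>p \<noteq> 0\<close> z z_ann prefix])
  also have "\<dots> < n + L" using T deg by (simp add: K_def)
  finally have "vec_space.rank (L + n) M < n + L" .
  then show ?thesis
    using x0 unfolding M_def x_def by (intro exI[of _ "trajectory A B u x0"]) (simp add: A B)
qed

lemma coeff_Poly_list_of_vec: "coeff (Poly (list_of_vec v)) i = (if i < dim_vec v then v $ i else 0)"
  by (simp add: nth_default_def)

lemma sum_coeff_lessThan:
  fixes p :: "'a::comm_semiring_0 poly"
  assumes "\<And>i. N \<le> i \<Longrightarrow> coeff p i = 0"
  shows "(\<Sum>i\<le>degree p. coeff p i * f i) = (\<Sum>i<N. coeff p i * f i)"
proof (cases "p = 0")
  case False
  then have "degree p < N" using assms leading_coeff_0_iff not_le by blast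
  then show ?thesis using assms by (intro sum.mono_neutral_left) (auto simp: coeff_eq_0)
qed simp

lemma poly_shift_op_hankel_annihilator:
  assumes \<eta>: "\<eta> \<in> carrier_vec N" and s: "s \<le> T - N"
    and ann: "transpose_mat (hankel_scalar N T u) *\<^sub>v \<eta> = 0\<^sub>v (T - N + 1)"
  shows "poly_shift_op (Poly (list_of_vec \<eta>)) u s = 0"
proof -
  let ?p = "Poly (list_of_vec \<eta>)"
  have "0 = (transpose_mat (hankel_scalar N T u) *\<^sub>v \<eta>) $ s" using ann s by simp
  also have "\<dots> = (\<Sum>i<N. \<eta> $ i * u (s + i))"
    using \<eta> s by (simp add: hankel_scalar_def scalar_prod_def atLeast0LessThan ac_simps)
  also have "\<dots> = poly_shift_op ?p u s"
    using \<eta> unfolding poly_shift_op_def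
    by (subst sum_coeff_lessThan[of N]) (auto simp: nth_default_def intro: sum.cong)
  finally show ?thesis by simp
qed

lemma Poly_list_of_vec_eq_0_iff: "Poly (list_of_vec v) = 0 \<longleftrightarrow> v = 0\<^sub>v (dim_vec v)"
proof
  assume "Poly (list_of_vec v) = 0"
  then show "v = 0\<^sub>v (dim_vec v)"
    by (intro eq_vecI) (auto simp: poly_eq_iff nth_default_def, metis list_of_vec_index)
qed (metis list_of_vec_0 Poly_replicate_0)

lemma degree_Poly_list_of_vec_less:
  assumes "v \<noteq> 0\<^sub>v (dim_vec v)"
  shows "degree (Poly (list_of_vec v)) < dim_vec v"
  using assms Poly_list_of_vec_eq_0_iff[of v] coeff_Poly_list_of_vec[of v]
  by (metis leading_coeff_0_iff not_le)

lemma poly_map_Poly_list_of_vec: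
  "poly (map_poly of_real (Poly (list_of_vec v))) z = (\<Sum>i<dim_vec v. z ^ i * of_real (v $ i))"
proof -
  have "poly (map_poly of_real (Poly (list_of_vec v))) z
      = (\<Sum>i<dim_vec v. coeff (map_poly of_real (Poly (list_of_vec v))) i * z ^ i)"
    unfolding poly_altdef by (rule sum_coeff_lessThan) (simp add: coeff_map_poly nth_default_def)
  then show ?thesis by (simp add: coeff_map_poly nth_default_def mult.commute)
qed

lemma det_poly_mat_of_real_nonzero:
  fixes A :: "real mat"
  assumes A: "A \<in> carrier_mat n n" and "p \<noteq> 0"
    and no_root: "\<And>\<mu>. eigenvalue (map_mat complex_of_real A) \<mu> \<Longrightarrow> poly (map_poly complex_of_real p) \<mu> \<noteq> 0"
  shows "det (poly_mat p A) \<noteq> 0"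
proof -
  have "det (map_mat complex_of_real (poly_mat p A)) \<noteq> 0"
    unfolding of_real_hom.poly_mat_hom[OF A]
    using A \<open>p \<noteq> 0\<close> no_root by (intro det_poly_mat_nonzero[of _ n]) auto
  then show ?thesis by simp
qed

theorem proposition3:
  fixes n T L :: nat and u :: "nat \<Rightarrow> real" and \<eta> :: "real vec"
  assumes "1 \<le> L" and "L \<le> T" and "n + L \<le> T"
    and "\<eta> \<in> carrier_vec (n + L)" and "\<eta> \<noteq> 0\<^sub>v (n + L)"
    and "transpose_mat (hankel_scalar (n + L) T u) *\<^sub>v \<eta> = 0\<^sub>v (T - (n + L) + 1)"
  shows "\<forall>A B. A \<in> carrier_mat n n \<longrightarrow> B \<in> carrier_vec n \<longrightarrow> spec A \<inter> Lambda \<eta> = {} \<longrightarrow>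
    (\<exists>x :: nat \<Rightarrow> real vec.
       (\<forall>t \<le> T - L. x t \<in> carrier_vec n) \<and>
       (\<forall>t < T - L. x (t + 1) = A *\<^sub>v x t + u t \<cdot>\<^sub>v B) \<and>
       vec_space.rank (L + n) (hankel_scalar L T u @\<^sub>r hankel n 1 (T - L + 1) x) < n + L)"
proof (intro allI impI)
  fix A :: "real mat" and B :: "real vec"
  assume A: "A \<in> carrier_mat n n" and B: "B \<in> carrier_vec n" and spec: "spec A \<inter> Lambda \<eta> = {}"
  define p where "p = Poly (list_of_vec \<eta>)"
  have "p \<noteq> 0" and deg: "degree p < n + L"
    using assms(4,5) Poly_list_of_vec_eq_0_iff[of \<eta>] degree_Poly_list_of_vec_less[of \<eta>]
    by (auto simp: p_def)
  have "det (poly_mat p A) \<noteq> 0"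
  proof (rule det_poly_mat_of_real_nonzero[OF A \<open>p \<noteq> 0\<close>])
    fix \<mu> assume "eigenvalue (map_mat complex_of_real A) \<mu>"
    then have "\<mu> \<notin> Lambda \<eta>" using spec by (auto simp: spec_def)
    then show "poly (map_poly complex_of_real p) \<mu> \<noteq> 0"
      by (simp add: Lambda_def p_def poly_map_Poly_list_of_vec)
  qed
  moreover have "poly_shift_op p u s = 0" if "s \<le> T - (n + L)" for s
    unfolding p_def using assms(4,6) that by (intro poly_shift_op_hankel_annihilator)
  ultimately show "\<exists>x. (\<forall>t \<le> T - L. x t \<in> carrier_vec n) \<and> (\<forall>t < T - L. x (t + 1) = A *\<^sub>v x t + u t \<cdot>\<^sub>v B) \<and>
       vec_space.rank (L + n) (hankel_scalar L T u @\<^sub>r hankel n 1 (T - L + 1) x) < n + L"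
    using exists_trajectory_rank_less[OF A B \<open>p \<noteq> 0\<close> deg assms(3)] by blast
qed

end
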